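(* Let $\mathcal A$ be an NBA and let $R$ be a strict partial order on its states with $R\subseteq\ \subseteq^{\mathrm{di}}$. Then $P(\mathrm{id},R)$ is good for pruning, i.e. $\mathcal L(\mathrm{Prune}(\mathcal A,P(\mathrm{id},R)))=\mathcal L(\mathcal A)$. In particular this holds for $R$ the strict part of direct trace inclusion.
   Context: An NBA is $\mathcal A=(\Sigma,Q,I,F,\delta)$, $\delta\subseteq Q\times\Sigma\times Q$, assumed forward and backward complete. Traces, initial traces (starting in $I$), fair traces (infinite, visiting $F$ infinitely often), and the language (infinite words with an initial fair trace) are as usual. Direct trace inclusion: $p\subseteq^{\mathrm{di}}q$ iff for every infinite word $w=\sigma_0\sigma_1\cdots$ and every infinite trace $p=p_0\xrightarrow{\sigma_0}p_1\xrightarrow{\sigma_1}\cdots$ there is an infinite trace $q=q_0\xrightarrow{\sigma_0}q_1\xrightarrow{\sigma_1}\cdots$ with $p_i\in F\Rightarrow q_i\in F$ for all $i$. Its strict part: $p\subset^{\mathrm{di}}q$ iff $p\subseteq^{\mathrm{di}}q$ and not $q\subseteq^{\mathrm{di}}p$. For $P\subseteq\delta\times\delta$, $\mathrm{Prune}(\mathcal A,P)=(\Sigma,Q,I,F,\delta')$ with $\delta'=\{t\in\delta:\nexists t'\in\delta,\ (t,t')\in P\}$ (all dominated transitions are removed simultaneously). For $R_b,R_f\subseteq Q\times Q$, $P(R_b,R_f)=\{((p,\sigma,r),(p',\sigma,r'))\in\delta\times\delta: p\,R_b\,p',\ r\,R_f\,r'\}$; $\mathrm{id}$ is the identity relation.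 $P$ is good for pruning if the pruned automaton has the same language as $\mathcal A$. *)

theory Defs
  imports Main
begin

record ('a, 'q) nba =
  alphabet :: "'a set"
  states :: "'q set"
  initial :: "'q set"
  accepting :: "'q set"
  delta :: "('q \<times> 'a \<times> 'q) set"

definition nba_wf :: "('a, 'q) nba \<Rightarrow> bool" where
  "nba_wf A \<longleftrightarrow>
     finite (alphabet A) \<and> finite (states A) \<and>
     initial A \<subseteq> states A \<and> accepting A \<subseteq> states A \<and>
     delta A \<subseteq> states A \<times> alphabet A \<times> states A"

definition forward_complete :: "('a, 'q) nba \<Rightarrow> bool" where
  "forward_complete A \<longleftrightarrow>
     (\<forall>q \<in> states A. \<forall>a \<in> alphabet A. \<exists>q'. (q, a, q') \<in> delta A)"

definition backward_complete :: "('a, 'q) nba \<Rightarrow> bool" where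
  "backward_complete A \<longleftrightarrow>
     (\<forall>q \<in> states A. \<forall>a \<in> alphabet A. \<exists>q'. (q', a, q) \<in> delta A)"

definition inf_trace :: "('a, 'q) nba \<Rightarrow> (nat \<Rightarrow> 'a) \<Rightarrow> (nat \<Rightarrow> 'q) \<Rightarrow> bool" where
  "inf_trace A w r \<longleftrightarrow> (\<forall>i. (r i, w i, r (Suc i)) \<in> delta A)"

definition fair :: "('a, 'q) nba \<Rightarrow> (nat \<Rightarrow> 'q) \<Rightarrow> bool" where
  "fair A r \<longleftrightarrow> (\<exists>\<^sub>\<infinity> i. r i \<in> accepting A)"

definition language :: "('a, 'q) nba \<Rightarrow> (nat \<Rightarrow> 'a) set" where
  "language A = {w. (\<forall>i. w i \<in> alphabet A) \<and>
     (\<exists>r. r 0 \<in> initial A \<and> inf_trace A w r \<and> fair A r)}"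

definition di_incl :: "('a, 'q) nba \<Rightarrow> 'q \<Rightarrow> 'q \<Rightarrow> bool" where
  "di_incl A p q \<longleftrightarrow>
     (\<forall>w r. inf_trace A w r \<and> r 0 = p \<longrightarrow>
        (\<exists>r'. inf_trace A w r' \<and> r' 0 = q \<and>
              (\<forall>i. r i \<in> accepting A \<longrightarrow> r' i \<in> accepting A)))"

definition di_rel :: "('a, 'q) nba \<Rightarrow> ('q \<times> 'q) set" where
  "di_rel A = {(p, q). p \<in> states A \<and> q \<in> states A \<and> di_incl A p q}"

definition strict_di_rel :: "('a, 'q) nba \<Rightarrow> ('q \<times> 'q) set" where
  "strict_di_rel A = {(p, q). (p, q) \<in> di_rel A \<and> (q, p) \<notin> di_rel A}"

definition prune :: "('a, 'q) nba \<Rightarrow> (('q \<times> 'a \<times> 'q) \<times> ('q \<times> 'a \<times> 'q)) set \<Rightarrow> ('a, 'q) nba" where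
  "prune A P = A\<lparr> delta := {t \<in> delta A. \<not> (\<exists>t' \<in> delta A. (t, t') \<in> P)} \<rparr>"

definition Prel :: "('a, 'q) nba \<Rightarrow> ('q \<times> 'q) set \<Rightarrow> ('q \<times> 'q) set
    \<Rightarrow> (('q \<times> 'a \<times> 'q) \<times> ('q \<times> 'a \<times> 'q)) set" where
  "Prel A Rb Rf = {((p, a, r), (p', a', r')).
      (p, a, r) \<in> delta A \<and> (p', a', r') \<in> delta A \<and> a = a' \<and>
      (p, p') \<in> Rb \<and> (r, r') \<in> Rf}"

definition good_for_pruning :: "('a, 'q) nba \<Rightarrow> (('q \<times> 'a \<times> 'q) \<times> ('q \<times> 'a \<times> 'q)) set \<Rightarrow> bool" where
  "good_for_pruning A P \<longleftrightarrow> language (prune A P) = language A"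

end

theory Submission
  imports Defs
begin

text \<open>Take an accepting run r. Build a new run greedily: at step i keep a state q that can still
  follow the rest of w while being accepting whenever r is, and move to an R-maximal successor with
  the same property. Maximal elements exist because the state space is finite and R is a strict
  order. The chosen transition survives pruning: a dominating transition (q, w i, s') with
  (s, s') \<in> R would, since R \<subseteq> \<subseteq>di, lead to a successor s' with the same property, contradicting
  maximality. The new run is accepting wherever r is, so the word stays in the language.\<close>

lemma prune_simps [simp]:
  "alphabet (prune A P) = alphabet A" "initial (prune A P) = initial A"
  "accepting (prune A P) = accepting A" "states (prune A P) = states A"
  "delta (prune A P) = {t \<in> delta A. \<not> (\<exists>t' \<in> delta A. (t, t') \<in> P)}"
  by (simp_all add: prune_def)

lemma di_incl_trans:
  assumes "di_incl A p q" and "di_incl A q s"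
  shows "di_incl A p s"
  unfolding di_incl_def
proof (intro allI impI)
  fix w r assume "inf_trace A w r \<and> r 0 = p"
  then obtain r1 where "inf_trace A w r1" "r1 0 = q"
      "\<forall>i. r i \<in> accepting A \<longrightarrow> r1 i \<in> accepting A"
    using assms(1) unfolding di_incl_def by blast
  then obtain r2 where "inf_trace A w r2" "r2 0 = s"
      "\<forall>i. r1 i \<in> accepting A \<longrightarrow> r2 i \<in> accepting A"
    using assms(2) unfolding di_incl_def by blast
  with \<open>\<forall>i. r i \<in> accepting A \<longrightarrow> r1 i \<in> accepting A\<close>
  show "\<exists>r'. inf_trace A w r' \<and> r' 0 = s \<and> (\<forall>i. r i \<in> accepting A \<longrightarrow> r' i \<in> accepting A)"
    by blast
qed

lemma trans_di_rel: "trans (di_rel A)"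
  unfolding di_rel_def by (auto intro!: transI intro: di_incl_trans)

lemma strict_di_rel_strict_order:
  "irrefl (strict_di_rel A)" "trans (strict_di_rel A)" "strict_di_rel A \<subseteq> di_rel A"
proof -
  show "irrefl (strict_di_rel A)" "strict_di_rel A \<subseteq> di_rel A"
    unfolding irrefl_def strict_di_rel_def by blast+
  show "trans (strict_di_rel A)"
  proof (rule transI)
    fix x y z
    assume "(x, y) \<in> strict_di_rel A" and "(y, z) \<in> strict_di_rel A"
    then have xy: "(x, y) \<in> di_rel A" and yz: "(y, z) \<in> di_rel A" and zy: "(z, y) \<notin> di_rel A"
      unfolding strict_di_rel_def by auto
    have "(x, z) \<in> di_rel A"
      using transD[OF trans_di_rel xy yz] .
    moreover have "(z, x) \<notin> di_rel A"
      using transD[OF trans_di_rel _ xy] zy by blast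
    ultimately show "(x, z) \<in> strict_di_rel A"
      unfolding strict_di_rel_def by blast
  qed
qed

lemma finite_strict_order_has_maximal:
  assumes "finite S" and "x \<in> S" and "irrefl R" and "trans R"
  shows "\<exists>m \<in> S. \<forall>y \<in> S. (m, y) \<notin> R"
proof -
  have "acyclic R"
    using assms(3,4) by (simp add: acyclic_def trancl_id irrefl_def)
  then have "acyclic (converse (R \<inter> S \<times> S))"
    unfolding acyclic_converse by (rule acyclic_subset) blast
  moreover have "finite (converse (R \<inter> S \<times> S))"
    using assms(1) by (simp add: finite_Int)
  ultimately have "wf (converse (R \<inter> S \<times> S))"
    by (rule finite_acyclic_wf[rotated])
  then obtain m where "m \<in> S" and "\<And>y. (y, m) \<in> converse (R \<inter> S \<times> S) \<Longrightarrow> y \<notin> S"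
    using wfE_min[OF _ assms(2)] by blast
  then show ?thesis
    by blast
qed

lemma inf_trace_from_invariant:
  assumes "P 0 q" and "\<And>i q. P i q \<Longrightarrow> \<exists>s. (q, w i, s) \<in> delta A \<and> P (Suc i) s"
  shows "\<exists>r. r 0 = q \<and> inf_trace A w r \<and> (\<forall>i. P i (r i))"
proof -
  define nxt where "nxt i q = (SOME s. (q, w i, s) \<in> delta A \<and> P (Suc i) s)" for i q
  have nxt: "(q, w i, nxt i q) \<in> delta A \<and> P (Suc i) (nxt i q)" if "P i q" for i q
    unfolding nxt_def using someI_ex[OF assms(2)[OF that]] .
  define r where "r = rec_nat q nxt"
  have inv: "P i (r i)" for i
    by (induction i) (simp_all add: r_def assms(1) nxt)
  have "inf_trace A w r"
    unfolding inf_trace_def using nxt[OF inv] by (simp add: r_def)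
  moreover have "r 0 = q"
    by (simp add: r_def)
  ultimately show ?thesis
    using inv by blast
qed

definition dominates_suffix ::
    "('a, 'q) nba \<Rightarrow> (nat \<Rightarrow> 'a) \<Rightarrow> (nat \<Rightarrow> 'q) \<Rightarrow> nat \<Rightarrow> 'q \<Rightarrow> bool" where
  "dominates_suffix A w r i q \<longleftrightarrow>
     (\<exists>t. inf_trace A (\<lambda>k. w (k + i)) t \<and> t 0 = q \<and>
          (\<forall>k. r (k + i) \<in> accepting A \<longrightarrow> t k \<in> accepting A))"

lemma dominates_suffix_start:
  "inf_trace A w r \<Longrightarrow> dominates_suffix A w r 0 (r 0)"
  unfolding dominates_suffix_def by auto

lemma dominates_suffix_accepting:
  "dominates_suffix A w r i q \<Longrightarrow> r i \<in> accepting A \<Longrightarrow> q \<in> accepting A"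
  unfolding dominates_suffix_def by (metis add_0_left)

lemma dominates_suffix_step:
  assumes "dominates_suffix A w r i q"
  shows "\<exists>s. (q, w i, s) \<in> delta A \<and> dominates_suffix A w r (Suc i) s"
proof -
  obtain t where t: "inf_trace A (\<lambda>k. w (k + i)) t" "t 0 = q"
    "\<forall>k. r (k + i) \<in> accepting A \<longrightarrow> t k \<in> accepting A"
    using assms unfolding dominates_suffix_def by blast
  have "(q, w i, t 1) \<in> delta A"
    using t(1,2) spec[OF t(1)[unfolded inf_trace_def], of 0] by simp
  moreover have "dominates_suffix A w r (Suc i) (t 1)"
    unfolding dominates_suffix_def
  proof (intro exI[of _ "\<lambda>k. t (Suc k)"] conjI allI impI)
    show "inf_trace A (\<lambda>k. w (k + Suc i)) (\<lambda>k. t (Suc k))"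
      unfolding inf_trace_def
    proof
      fix k
      show "(t (Suc k), w (k + Suc i), t (Suc (Suc k))) \<in> delta A"
        using t(1) unfolding inf_trace_def by (metis add_Suc add_Suc_right)
    qed
    fix k assume "r (k + Suc i) \<in> accepting A"
    then show "t (Suc k) \<in> accepting A"
      using t(3) by (metis add_Suc add_Suc_right)
  qed simp
  ultimately show ?thesis by blast
qed

lemma dominates_suffix_di_incl:
  assumes "dominates_suffix A w r i s" and "di_incl A s s'"
  shows "dominates_suffix A w r i s'"
proof -
  obtain t where "inf_trace A (\<lambda>k. w (k + i)) t" "t 0 = s"
      "\<forall>k. r (k + i) \<in> accepting A \<longrightarrow> t k \<in> accepting A"
    using assms(1) unfolding dominates_suffix_def by blast
  moreover from this obtain t' where "inf_trace A (\<lambda>k. w (k + i)) t'" "t' 0 = s'"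
      "\<forall>k. t k \<in> accepting A \<longrightarrow> t' k \<in> accepting A"
    using assms(2) unfolding di_incl_def by blast
  ultimately show ?thesis
    unfolding dominates_suffix_def by blast
qed

lemma dominates_suffix_pruned_step:
  assumes "finite (states A)" and "delta A \<subseteq> states A \<times> alphabet A \<times> states A"
    and "irrefl R" and "trans R" and "R \<subseteq> di_rel A"
    and "dominates_suffix A w r i q"
  shows "\<exists>s. (q, w i, s) \<in> delta (prune A (Prel A Id R)) \<and> dominates_suffix A w r (Suc i) s"
proof -
  define S where "S = {s. (q, w i, s) \<in> delta A \<and> dominates_suffix A w r (Suc i) s}"
  obtain s0 where "s0 \<in> S"
    using dominates_suffix_step[OF assms(6)] unfolding S_def by blast
  moreover have "finite S"
    using assms(1,2) by (auto simp: S_def intro: finite_subset)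
  ultimately obtain s where s: "s \<in> S" and maximal: "\<forall>s' \<in> S. (s, s') \<notin> R"
    using finite_strict_order_has_maximal[OF _ _ assms(3,4)] by blast
  have "s' \<in> S" if "(q, w i, s') \<in> delta A" and "(s, s') \<in> R" for s'
    using that s assms(5) dominates_suffix_di_incl[of A w r "Suc i" s s']
    unfolding S_def di_rel_def by blast
  with s maximal have "(q, w i, s) \<in> delta (prune A (Prel A Id R))"
    unfolding S_def Prel_def by auto
  with s show ?thesis unfolding S_def by blast
qed

lemma pruned_trace_dominates:
  assumes "finite (states A)" and "delta A \<subseteq> states A \<times> alphabet A \<times> states A"
    and "irrefl R" and "trans R" and "R \<subseteq> di_rel A"
    and "inf_trace A w r"
  shows "\<exists>r'. r' 0 = r 0 \<and> inf_trace (prune A (Prel A Id R)) w r' \<and>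
           (\<forall>i. r i \<in> accepting A \<longrightarrow> r' i \<in> accepting A)"
proof -
  obtain r' where "r' 0 = r 0" "inf_trace (prune A (Prel A Id R)) w r'"
      "\<forall>i. dominates_suffix A w r i (r' i)"
    using inf_trace_from_invariant[OF dominates_suffix_start[OF assms(6)]
        dominates_suffix_pruned_step[OF assms(1-5)]]
    by blast
  moreover from this(3) have "\<forall>i. r i \<in> accepting A \<longrightarrow> r' i \<in> accepting A"
    by (blast intro: dominates_suffix_accepting)
  ultimately show ?thesis
    by blast
qed

lemma language_prune_subset: "language (prune A P) \<subseteq> language A"
  unfolding language_def inf_trace_def fair_def by auto

lemma good_for_pruning_Prel_Id:
  assumes "nba_wf A" and "irrefl R" and "trans R" and "R \<subseteq> di_rel A"
  shows "good_for_pruning A (Prel A Id R)"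
  unfolding good_for_pruning_def
proof (rule antisym[OF language_prune_subset subsetI])
  fix w assume "w \<in> language A"
  then obtain r where r: "\<forall>i. w i \<in> alphabet A" "r 0 \<in> initial A" "inf_trace A w r" "fair A r"
    unfolding language_def by blast
  obtain r' where r': "r' 0 = r 0" "inf_trace (prune A (Prel A Id R)) w r'"
    "\<forall>i. r i \<in> accepting A \<longrightarrow> r' i \<in> accepting A"
    using pruned_trace_dominates[OF _ _ assms(2-4) r(3)] assms(1) unfolding nba_wf_def by blast
  have "fair (prune A (Prel A Id R)) r'"
    using r(4) r'(3) unfolding fair_def by (auto elim: frequently_elim1)
  moreover have "r' 0 \<in> initial (prune A (Prel A Id R))" "\<forall>i. w i \<in> alphabet (prune A (Prel A Id R))"
    using r(1,2) r'(1) by simp_all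
  ultimately show "w \<in> language (prune A (Prel A Id R))"
    using r'(2) unfolding language_def by blast
qed

theorem theorem5p1:
  fixes A :: "('a, 'q) nba"
  assumes "nba_wf A" and "forward_complete A" and "backward_complete A"
  shows "(\<forall>R. irrefl R \<and> trans R \<and> R \<subseteq> di_rel A
            \<longrightarrow> good_for_pruning A (Prel A Id R))
         \<and> good_for_pruning A (Prel A Id (strict_di_rel A))"
  using good_for_pruning_Prel_Id[OF assms(1)] strict_di_rel_strict_order by blast

end
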